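(* Let $(X_t)_{t\in[0,1]}$ be a centered process as in the context, with KL expansion $X_t=\sum_{k\ge1}Z_ke_k(t)$, and assume that the coefficients $(Z_k)_{k\ge1}$ are mutually independent and that each $Z_k$ is sub-Gaussian with mean $0$ and parameter $\sqrt{\lambda_k}$. Let $c_g\in\mathbb R$, $K_g\ge0$, and for each $t\in[0,1]$ let $g_t:\mathbb R\to\mathbb R$ satisfy $g_t(x)-g_t(y)\le\max\big(|e^{c_gx}-e^{c_gy}|,\,K_g|x-y|\big)$ for all $x,y$ (the same constants for all $t$). Define $S_t=g_t(X_t)$ and, for $\epsilon>0$, $X'_t=\sum_{k=1}^{L_X(\epsilon)}Z_ke_k(t)$ and $S'_t=g_t(X'_t)$. Then there is a constant $C_2$, independent of $t$ and $\epsilon$, such that $$\mathbb E\big[(S_t-S'_t)^2\big]\le C_2\epsilon^2\qquad\text{for all }t\in[0,1]\text{ and all }\epsilon\in(0,1].$$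
   Context: Standing setup: $(X_t)_{t\in[0,1]}$ is a centered stochastic process with $\mathbb E[X_t^2]<\infty$ whose covariance $k_X(s,t)=\mathbb E[X_sX_t]$ is continuous on $[0,1]^2$. Let $\mathcal K$ be the integral operator $(\mathcal Kf)(t)=\int_0^1k_X(s,t)f(s)\,ds$ on $L^2([0,1])$, with orthonormal eigenfunctions $(e_k)_{k\ge1}$ and eigenvalues $\lambda_1\ge\lambda_2\ge\dots\ge0$. The Karhunen–Loève (KL) expansion is $X_t=\sum_{k\ge1}Z_ke_k(t)$ with $Z_k=\int_0^1X_te_k(t)\,dt$, converging in $L^2(\mathbb P)$ uniformly in $t$; the $Z_k$ are centered and uncorrelated with $\mathbb E[Z_k^2]=\lambda_k$. The truncation index $L_X(\epsilon)$ is the smallest natural number $L$ such that $\mathbb E\big[(\sum_{k=1}^{L}Z_ke_k(t)-X_t)^2\big]\le\epsilon^2$ for all $t\in[0,1]$. A real random variable $W$ with mean $m$ is sub-Gaussian with parameter $s\ge0$ if $\mathbb E[\exp(\theta(W-m))]\le\exp(\theta^2s^2/2)$ for all $\theta\in\mathbb R$. *)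

theory Defs
  imports "HOL-Probability.Probability"
begin

definition cov_fun :: "'a measure \<Rightarrow> (real \<Rightarrow> 'a \<Rightarrow> real) \<Rightarrow> real \<Rightarrow> real \<Rightarrow> real" where
  "cov_fun M X s t = (\<integral>\<omega>. X s \<omega> * X t \<omega> \<partial>M)"

definition KL_coeff :: "(real \<Rightarrow> 'a \<Rightarrow> real) \<Rightarrow> (nat \<Rightarrow> real \<Rightarrow> real) \<Rightarrow> nat \<Rightarrow> 'a \<Rightarrow> real" where
  "KL_coeff X e k \<omega> = (LINT t:{0..1}|lborel. X t \<omega> * e k t)"

definition KL_trunc :: "(real \<Rightarrow> 'a \<Rightarrow> real) \<Rightarrow> (nat \<Rightarrow> real \<Rightarrow> real) \<Rightarrow> nat \<Rightarrow> real \<Rightarrow> 'a \<Rightarrow> real" where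
  "KL_trunc X e L t \<omega> = (\<Sum>k=1..L. KL_coeff X e k \<omega> * e k t)"

definition trunc_index :: "'a measure \<Rightarrow> (real \<Rightarrow> 'a \<Rightarrow> real) \<Rightarrow> (nat \<Rightarrow> real \<Rightarrow> real) \<Rightarrow> real \<Rightarrow> nat" where
  "trunc_index M X e \<epsilon> = (LEAST L. \<forall>t\<in>{0..1}.
      (\<integral>\<omega>. (KL_trunc X e L t \<omega> - X t \<omega>)\<^sup>2 \<partial>M) \<le> \<epsilon>\<^sup>2)"

definition sub_gaussian :: "'a measure \<Rightarrow> ('a \<Rightarrow> real) \<Rightarrow> real \<Rightarrow> real \<Rightarrow> bool" where
  "sub_gaussian M W m s \<longleftrightarrow> s \<ge> 0 \<and>
     (\<forall>\<theta>::real. (\<integral>\<^sup>+\<omega>. ennreal (exp (\<theta> * (W \<omega> - m))) \<partial>M) \<le> ennreal (exp (\<theta>\<^sup>2 * s\<^sup>2 / 2)))"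

end

theory Submission
  imports Defs
begin

text \<open>Write \<open>X'\<close> for the truncated expansion and \<open>D = X - X'\<close>. Since
  \<open>\<bar>e\<^sup>a - e\<^sup>b\<bar> \<le> \<bar>a - b\<bar> max e\<^sup>a e\<^sup>b\<close>, Young's inequality bounds \<open>(g X - g X')\<^sup>2\<close> pointwise by
  \<open>\<epsilon>\<^sup>2\<close> times a combination of \<open>exp (\<alpha> D)\<close> with \<open>\<bar>\<alpha>\<bar> \<epsilon> \<le> 1 + 4 \<bar>c\<bar>\<close> and of \<open>exp (4 c X')\<close>;
  polynomial powers of \<open>D / \<epsilon>\<close> are dominated by \<open>exp (\<plusminus>D / \<epsilon>)\<close>. A finite combination
  \<open>\<Sum> a\<^sub>k Z\<^sub>k\<close> of the independent sub-Gaussian coefficients is sub-Gaussian with proxy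
  \<open>\<Sum> a\<^sub>k\<^sup>2 \<lambda>\<^sub>k\<close>, which is its variance because \<open>E[Z\<^sub>k\<^sup>2] = \<lambda>\<^sub>k\<close> (integrate the uniformly
  convergent truncated covariances against \<open>e\<^sub>k\<close>). So \<open>X'\<close> has proxy \<open>E[X'\<^sup>2]\<close>, and \<open>D\<close>,
  an almost sure limit of finite tails, has proxy \<open>3 \<epsilon>\<^sup>2\<close> by Fatou's lemma. All exponential
  moments above are therefore bounded uniformly in \<open>t\<close> and \<open>\<epsilon>\<close>.\<close>

section \<open>Elementary inequalities\<close>

lemma exp_abs_le_exp_add_exp_neg: "exp \<bar>x::real\<bar> \<le> exp x + exp (- x)"
  by (cases "x \<ge> 0") (simp_all add: add_increasing add_increasing2 less_imp_le)

lemma sq_le_exp_add_exp_neg: "(x::real)\<^sup>2 \<le> 2 * (exp x + exp (- x))"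
proof -
  have "\<bar>x\<bar>\<^sup>2 \<le> 2 * exp \<bar>x\<bar>"
    using exp_lower_Taylor_quadratic[of "\<bar>x\<bar>"] by simp
  then show ?thesis
    using exp_abs_le_exp_add_exp_neg[of x] by simp
qed

lemma power4_le_exp_add_exp_neg: "(x::real) ^ 4 \<le> 64 * (exp x + exp (- x))"
proof -
  have "\<bar>x\<bar>\<^sup>2 / 8 \<le> exp (\<bar>x\<bar> / 2)"
    using exp_lower_Taylor_quadratic[of "\<bar>x\<bar> / 2"] by (simp add: power_divide)
  then have "(\<bar>x\<bar>\<^sup>2 / 8)\<^sup>2 \<le> (exp (\<bar>x\<bar> / 2))\<^sup>2"
    by (intro power_mono) auto
  also have "(exp (\<bar>x\<bar> / 2))\<^sup>2 = exp \<bar>x\<bar>"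
    by (simp add: power2_eq_square flip: exp_add)
  finally have "\<bar>x\<bar> ^ 4 \<le> 64 * exp \<bar>x\<bar>"
    by (simp add: power2_eq_square power4_eq_xxxx)
  then show ?thesis
    using exp_abs_le_exp_add_exp_neg[of x] by simp
qed

lemma abs_exp_diff_le: "\<bar>exp (a::real) - exp b\<bar> \<le> \<bar>a - b\<bar> * max (exp a) (exp b)"
proof -
  have *: "exp a - exp b \<le> (a - b) * exp a" if "b \<le> a" for a b :: real
  proof -
    have "exp a * (1 + (b - a)) \<le> exp a * exp (b - a)"
      by (intro mult_left_mono) auto
    then show ?thesis
      by (simp add: algebra_simps flip: exp_add)
  qed
  show ?thesis
    using *[of b a] *[of a b] by (cases "b \<le> a") (auto simp: abs_if max_def)
qed

lemma abs_mult_le_weighted_squares: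
  fixes a b \<eta> :: real
  assumes "\<eta> > 0"
  shows "\<bar>a * b\<bar> \<le> (a\<^sup>2 / \<eta> + \<eta> * b\<^sup>2) / 2"
proof -
  have "2 * (\<bar>a\<bar> / sqrt \<eta>) * (sqrt \<eta> * \<bar>b\<bar>) \<le> (\<bar>a\<bar> / sqrt \<eta>)\<^sup>2 + (sqrt \<eta> * \<bar>b\<bar>)\<^sup>2"
    by (rule sum_squares_bound)
  then show ?thesis
    using assms by (simp add: abs_mult power_divide power_mult_distrib)
qed

lemma sq_add_le: "((a::real) + b)\<^sup>2 \<le> 2 * a\<^sup>2 + 2 * b\<^sup>2"
  using sum_squares_bound[of a b] by (simp add: power2_sum)

lemma exp_diff_sq_le:
  fixes c x y :: real
  shows "(exp (c * x) - exp (c * y))\<^sup>2 \<le> c\<^sup>2 * (x - y)\<^sup>2 * (exp (2 * c * y) * (exp (2 * c * (x - y)) + 1))"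
proof -
  have "\<bar>exp (c * x) - exp (c * y)\<bar> \<le> \<bar>c\<bar> * \<bar>x - y\<bar> * max (exp (c * x)) (exp (c * y))"
    using abs_exp_diff_le[of "c * x" "c * y"] by (simp add: abs_mult flip: right_diff_distrib)
  then have "(exp (c * x) - exp (c * y))\<^sup>2 \<le> c\<^sup>2 * (x - y)\<^sup>2 * (max (exp (c * x)) (exp (c * y)))\<^sup>2"
    using power_mono[of _ _ 2] by (fastforce simp: power_mult_distrib)
  also have "(max (exp (c * x)) (exp (c * y)))\<^sup>2 \<le> (exp (c * x))\<^sup>2 + (exp (c * y))\<^sup>2"
    by (simp add: max_def)
  also have "\<dots> = exp (2 * c * y) * (exp (2 * c * (x - y)) + 1)"
    by (simp add: power2_eq_square distrib_left algebra_simps flip: exp_add)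
  finally show ?thesis
    by (simp add: mult_left_mono)
qed

lemma sq_le_exp_moments:
  fixes d \<epsilon> :: real
  assumes "\<epsilon> > 0"
  shows "d\<^sup>2 \<le> 2 * \<epsilon>\<^sup>2 * (exp (d / \<epsilon>) + exp (- (d / \<epsilon>)))"
proof -
  have "d\<^sup>2 = \<epsilon>\<^sup>2 * (d / \<epsilon>)\<^sup>2"
    using assms by (simp add: power_divide)
  also have "\<dots> \<le> \<epsilon>\<^sup>2 * (2 * (exp (d / \<epsilon>) + exp (- (d / \<epsilon>))))"
    by (intro mult_left_mono sq_le_exp_add_exp_neg) simp
  finally show ?thesis
    by (simp only: mult_ac)
qed

lemma power4_le_exp_moments:
  fixes d \<epsilon> :: real
  assumes "\<epsilon> > 0"
  shows "d ^ 4 \<le> 64 * \<epsilon> ^ 4 * (exp (d / \<epsilon>) + exp (- (d / \<epsilon>)))"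
proof -
  have "d ^ 4 = \<epsilon> ^ 4 * (d / \<epsilon>) ^ 4"
    using assms by (simp add: power_divide)
  also have "\<dots> \<le> \<epsilon> ^ 4 * (64 * (exp (d / \<epsilon>) + exp (- (d / \<epsilon>))))"
    by (intro mult_left_mono power4_le_exp_add_exp_neg) simp
  finally show ?thesis
    by (simp only: mult_ac)
qed

lemma exp_diff_sq_le_exp_moments:
  fixes c x y \<epsilon> :: real
  assumes "\<epsilon> > 0"
  defines "d \<equiv> x - y"
  shows "(exp (c * x) - exp (c * y))\<^sup>2
    \<le> \<epsilon>\<^sup>2 * (64 * c\<^sup>2 * (exp ((1 / \<epsilon> + 4 * c) * d) + exp ((4 * c - 1 / \<epsilon>) * d)
                     + exp (d / \<epsilon>) + exp (- (d / \<epsilon>)))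
             + c\<^sup>2 / 2 * exp (4 * c * y))"
proof -
  define w where "w = exp (2 * c * d) + 1"
  define E where "E = exp (d / \<epsilon>) + exp (- (d / \<epsilon>))"
  have w_sq: "w\<^sup>2 \<le> 2 * (exp (4 * c * d) + 1)"
    using sq_add_le[of "exp (2 * c * d)" 1] by (simp add: w_def power2_eq_square mult.assoc flip: exp_add)
  have "d ^ 4 * w\<^sup>2 \<le> 64 * \<epsilon> ^ 4 * E * (2 * (exp (4 * c * d) + 1))"
    using power4_le_exp_moments[OF assms(1), of d] w_sq
    by (intro mult_mono) (auto simp: E_def add_nonneg_nonneg)
  also have "\<dots> = 128 * \<epsilon> ^ 4 * (E * exp (4 * c * d) + E)"
    by (simp add: algebra_simps)
  also have "E * exp (4 * c * d) = exp ((1 / \<epsilon> + 4 * c) * d) + exp ((4 * c - 1 / \<epsilon>) * d)"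
    by (simp add: E_def distrib_right flip: exp_add) (simp add: algebra_simps)
  finally have w4: "d ^ 4 * w\<^sup>2 \<le> 128 * \<epsilon> ^ 4 * (exp ((1 / \<epsilon> + 4 * c) * d)
      + exp ((4 * c - 1 / \<epsilon>) * d) + E)" .
  \<comment> \<open>Young's inequality splits the product \<open>d\<^sup>2 w exp (2 c y)\<close> so that the exponential
    in \<open>y\<close> is weighted by \<open>\<epsilon>\<^sup>2\<close>.\<close>
  have "d\<^sup>2 * w * exp (2 * c * y) \<le> ((d\<^sup>2 * w)\<^sup>2 / \<epsilon>\<^sup>2 + \<epsilon>\<^sup>2 * (exp (2 * c * y))\<^sup>2) / 2"
    using abs_mult_le_weighted_squares[of "\<epsilon>\<^sup>2" "d\<^sup>2 * w" "exp (2 * c * y)"] assms(1) by simp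
  also have "\<dots> = (d ^ 4 * w\<^sup>2 / \<epsilon>\<^sup>2 + \<epsilon>\<^sup>2 * exp (4 * c * y)) / 2"
    by (simp add: power_mult_distrib power2_eq_square power4_eq_xxxx mult.assoc flip: exp_add)
  also have "\<dots> \<le> \<epsilon>\<^sup>2 * (64 * (exp ((1 / \<epsilon> + 4 * c) * d) + exp ((4 * c - 1 / \<epsilon>) * d) + E)
                    + exp (4 * c * y) / 2)"
    using divide_right_mono[OF w4, of "\<epsilon>\<^sup>2"] assms(1)
    by (simp add: power4_eq_xxxx power2_eq_square field_simps)
  finally have "c\<^sup>2 * (d\<^sup>2 * w * exp (2 * c * y)) \<le> c\<^sup>2 * (\<epsilon>\<^sup>2 * (64 * (exp ((1 / \<epsilon> + 4 * c) * d)
      + exp ((4 * c - 1 / \<epsilon>) * d) + E) + exp (4 * c * y) / 2))"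
    by (intro mult_left_mono) auto
  then show ?thesis
    using exp_diff_sq_le[of c x y] by (simp add: d_def w_def E_def algebra_simps)
qed

lemma sq_diff_le_exp_moments:
  fixes G c K x y \<epsilon> :: real
  assumes G: "\<bar>G\<bar> \<le> max \<bar>exp (c * x) - exp (c * y)\<bar> (K * \<bar>x - y\<bar>)"
    and "K \<ge> 0" and "\<epsilon> > 0"
  defines "d \<equiv> x - y"
  shows "G\<^sup>2 \<le> \<epsilon>\<^sup>2 * (64 * c\<^sup>2 * (exp ((1 / \<epsilon> + 4 * c) * d) + exp ((4 * c - 1 / \<epsilon>) * d)
                          + exp (d / \<epsilon>) + exp (- (d / \<epsilon>)))
                 + c\<^sup>2 / 2 * exp (4 * c * y) + 2 * K\<^sup>2 * (exp (d / \<epsilon>) + exp (- (d / \<epsilon>))))"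
proof -
  have "G\<^sup>2 \<le> (max \<bar>exp (c * x) - exp (c * y)\<bar> (K * \<bar>d\<bar>))\<^sup>2"
    using G power_mono[of "\<bar>G\<bar>" _ 2] by (simp add: d_def)
  also have "\<dots> \<le> (exp (c * x) - exp (c * y))\<^sup>2 + K\<^sup>2 * d\<^sup>2"
    using \<open>K \<ge> 0\<close> by (auto simp: max_def power_mult_distrib)
  finally show ?thesis
    using exp_diff_sq_le_exp_moments[OF \<open>\<epsilon> > 0\<close>, of c x y]
      mult_left_mono[OF sq_le_exp_moments[OF \<open>\<epsilon> > 0\<close>, of d], of "K\<^sup>2"]
    by (simp add: d_def algebra_simps)
qed

lemma eq_0_if_abs_le_mult_all_pos:
  fixes x c :: real
  assumes "\<And>\<gamma>. \<gamma> > 0 \<Longrightarrow> \<bar>x\<bar> \<le> \<gamma> * c"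
  shows "x = 0"
proof -
  have "\<bar>x\<bar> \<le> 0"
  proof (rule field_le_epsilon)
    fix \<epsilon> :: real
    assume "\<epsilon> > 0"
    then have "\<bar>x\<bar> \<le> \<epsilon> / (\<bar>c\<bar> + 1) * c"
      using assms[of "\<epsilon> / (\<bar>c\<bar> + 1)"] by (simp add: add_pos_nonneg)
    also have "\<dots> \<le> \<epsilon>"
      using \<open>\<epsilon> > 0\<close> by (simp add: field_simps) (smt (verit) mult_left_mono)
    finally show "\<bar>x\<bar> \<le> 0 + \<epsilon>"
      by simp
  qed
  then show ?thesis
    by simp
qed

section \<open>Square-integrable functions\<close>

definition square_integrable :: "'a measure \<Rightarrow> ('a \<Rightarrow> real) \<Rightarrow> bool" where
  "square_integrable M f \<longleftrightarrow> f \<in> borel_measurable M \<and> integrable M (\<lambda>x. (f x)\<^sup>2)"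

lemma square_integrable_mult:
  assumes "square_integrable M f" "square_integrable M g"
  shows "integrable M (\<lambda>x. f x * g x)"
proof (rule Bochner_Integration.integrable_bound)
  show "integrable M (\<lambda>x. (f x)\<^sup>2 + (g x)\<^sup>2)"
    using assms by (auto simp: square_integrable_def)
  show "AE x in M. norm (f x * g x) \<le> norm ((f x)\<^sup>2 + (g x)\<^sup>2)"
  proof (intro AE_I2)
    fix x
    have "\<bar>f x * g x\<bar> \<le> ((f x)\<^sup>2 + (g x)\<^sup>2) / 2"
      using abs_mult_le_weighted_squares[of 1 "f x" "g x"] by simp
    then show "norm (f x * g x) \<le> norm ((f x)\<^sup>2 + (g x)\<^sup>2)"
      by simp
  qed
qed (use assms in \<open>auto simp: square_integrable_def\<close>)

lemma square_integrable_add: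
  assumes "square_integrable M f" "square_integrable M g"
  shows "square_integrable M (\<lambda>x. f x + g x)"
  using assms square_integrable_mult[OF assms]
  by (auto simp: square_integrable_def power2_sum mult.assoc)

lemma square_integrable_cmult:
  "square_integrable M f \<Longrightarrow> square_integrable M (\<lambda>x. c * f x)"
  by (auto simp: square_integrable_def power_mult_distrib)

lemma square_integrable_diff:
  assumes "square_integrable M f" "square_integrable M g"
  shows "square_integrable M (\<lambda>x. f x - g x)"
  using square_integrable_add[OF assms(1) square_integrable_cmult[OF assms(2), of "-1"]] by simp

lemma square_integrable_sum:
  "(\<And>i. i \<in> F \<Longrightarrow> square_integrable M (f i)) \<Longrightarrow> square_integrable M (\<lambda>x. \<Sum>i\<in>F. f i x)"
proof (induction F rule: infinite_finite_induct)
  case (insert i F)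
  then show ?case
    by (simp add: square_integrable_add)
qed (simp_all add: square_integrable_def)

lemma (in finite_measure) square_integrable_integrable:
  "square_integrable M f \<Longrightarrow> integrable M f"
  by (auto simp: square_integrable_def intro: square_integrable_imp_integrable)

lemma integral_sq_add_le:
  assumes "square_integrable M f" "square_integrable M g"
  shows "(\<integral>x. (f x + g x)\<^sup>2 \<partial>M) \<le> 2 * (\<integral>x. (f x)\<^sup>2 \<partial>M) + 2 * (\<integral>x. (g x)\<^sup>2 \<partial>M)"
proof -
  have "(\<integral>x. (f x + g x)\<^sup>2 \<partial>M) \<le> (\<integral>x. 2 * (f x)\<^sup>2 + 2 * (g x)\<^sup>2 \<partial>M)"
    using assms square_integrable_add[OF assms]
    by (intro integral_mono sq_add_le) (auto simp: square_integrable_def)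
  also have "\<dots> = 2 * (\<integral>x. (f x)\<^sup>2 \<partial>M) + 2 * (\<integral>x. (g x)\<^sup>2 \<partial>M)"
    using assms by (simp add: square_integrable_def)
  finally show ?thesis .
qed

lemma abs_integral_mult_le_weighted:
  assumes "square_integrable M f" "square_integrable M g" "\<eta> > 0"
  shows "\<bar>\<integral>x. f x * g x \<partial>M\<bar> \<le> ((\<integral>x. (f x)\<^sup>2 \<partial>M) / \<eta> + \<eta> * (\<integral>x. (g x)\<^sup>2 \<partial>M)) / 2"
proof -
  have "\<bar>\<integral>x. f x * g x \<partial>M\<bar> \<le> (\<integral>x. \<bar>f x * g x\<bar> \<partial>M)"
    using integral_norm_bound[of M "\<lambda>x. f x * g x"] by simp
  also have "\<dots> \<le> (\<integral>x. ((f x)\<^sup>2 / \<eta> + \<eta> * (g x)\<^sup>2) / 2 \<partial>M)"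
    using assms square_integrable_mult[OF assms(1,2)]
    by (intro integral_mono abs_mult_le_weighted_squares) (auto simp: square_integrable_def)
  also have "\<dots> = ((\<integral>x. (f x)\<^sup>2 \<partial>M) / \<eta> + \<eta> * (\<integral>x. (g x)\<^sup>2 \<partial>M)) / 2"
    using assms by (simp add: square_integrable_def)
  finally show ?thesis .
qed

lemma abs_integral_mult_diff_le:
  assumes f: "square_integrable M f" "square_integrable M f'"
    and g: "square_integrable M g" "square_integrable M g'" and "\<eta> > 0"
  shows "\<bar>(\<integral>x. f x * g x \<partial>M) - (\<integral>x. f' x * g' x \<partial>M)\<bar>
    \<le> ((\<integral>x. (f x - f' x)\<^sup>2 \<partial>M) / \<eta> + \<eta> * (\<integral>x. (g x)\<^sup>2 \<partial>M)) / 2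
     + ((\<integral>x. (g x - g' x)\<^sup>2 \<partial>M) / \<eta> + \<eta> * (\<integral>x. (f' x)\<^sup>2 \<partial>M)) / 2"
proof -
  have df: "square_integrable M (\<lambda>x. f x - f' x)" and dg: "square_integrable M (\<lambda>x. g x - g' x)"
    using f g by (auto intro: square_integrable_diff)
  have "(\<integral>x. f x * g x \<partial>M) - (\<integral>x. f' x * g' x \<partial>M)
      = (\<integral>x. (f x - f' x) * g x \<partial>M) + (\<integral>x. (g x - g' x) * f' x \<partial>M)"
    using square_integrable_mult[OF df g(1)] square_integrable_mult[OF dg f(2)]
      square_integrable_mult[OF f(1) g(1)] square_integrable_mult[OF f(2) g(2)]
    by (simp add: algebra_simps flip: Bochner_Integration.integral_add Bochner_Integration.integral_diff)
  then show ?thesis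
    using abs_integral_mult_le_weighted[OF df g(1) \<open>\<eta> > 0\<close>] abs_integral_mult_le_weighted[OF dg f(2) \<open>\<eta> > 0\<close>]
    by linarith
qed

lemma integrable_if_nn_integral_le:
  fixes f :: "'a \<Rightarrow> real"
  assumes "f \<in> borel_measurable M" "\<And>x. 0 \<le> f x" "(\<integral>\<^sup>+x. ennreal (f x) \<partial>M) \<le> ennreal b"
  shows "integrable M f"
  using assms by (intro integrableI_nonneg) (auto simp: le_less_trans)

lemma integral_le_if_nn_integral_le:
  fixes f :: "'a \<Rightarrow> real"
  assumes "f \<in> borel_measurable M" "\<And>x. 0 \<le> f x" "(\<integral>\<^sup>+x. ennreal (f x) \<partial>M) \<le> ennreal b" "0 \<le> b"
  shows "(\<integral>x. f x \<partial>M) \<le> b"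
  using assms nn_integral_eq_integral[OF integrable_if_nn_integral_le[OF assms(1-3)]] by simp

lemma nn_integral_le_if_AE_LIMSEQ:
  fixes u :: "nat \<Rightarrow> 'a \<Rightarrow> ennreal"
  assumes "\<And>n. u n \<in> borel_measurable M" "AE x in M. (\<lambda>n. u n x) \<longlonglongrightarrow> f x"
    and "\<And>n. (\<integral>\<^sup>+x. u n x \<partial>M) \<le> B"
  shows "(\<integral>\<^sup>+x. f x \<partial>M) \<le> B"
proof -
  have "(\<integral>\<^sup>+x. f x \<partial>M) = (\<integral>\<^sup>+x. liminf (\<lambda>n. u n x) \<partial>M)"
    using assms(2) by (intro nn_integral_cong_AE) (auto simp: lim_imp_Liminf)
  also have "\<dots> \<le> liminf (\<lambda>n. \<integral>\<^sup>+x. u n x \<partial>M)"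
    by (rule nn_integral_liminf) (use assms(1) in auto)
  also have "\<dots> \<le> B"
    using assms(3) by (intro Liminf_le) auto
  finally show ?thesis .
qed

lemma L2_tendsto_imp_AE_LIMSEQ_subseq:
  fixes f :: "nat \<Rightarrow> 'a \<Rightarrow> real"
  assumes "\<And>n. square_integrable M (\<lambda>x. f n x - g x)"
    and "(\<lambda>n. \<integral>x. (f n x - g x)\<^sup>2 \<partial>M) \<longlonglongrightarrow> 0"
  shows "\<exists>r. strict_mono r \<and> (AE x in M. (\<lambda>n. f (r n) x) \<longlonglongrightarrow> g x)"
proof -
  obtain r where "strict_mono r" and r: "AE x in M. (\<lambda>n. (f (r n) x - g x)\<^sup>2) \<longlonglongrightarrow> 0"
    using tendsto_L1_AE_subseq[of M "\<lambda>n x. (f n x - g x)\<^sup>2"] assms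
    by (auto simp: square_integrable_def)
  have lim: "(\<lambda>n. f (r n) x) \<longlonglongrightarrow> g x" if "(\<lambda>n. (f (r n) x - g x)\<^sup>2) \<longlonglongrightarrow> 0" for x
  proof -
    have "(\<lambda>n. sqrt ((f (r n) x - g x)\<^sup>2)) \<longlonglongrightarrow> 0"
      using tendsto_real_sqrt[OF that] by simp
    then show ?thesis
      by (simp add: LIM_zero_iff tendsto_rabs_zero_iff)
  qed
  have "AE x in M. (\<lambda>n. f (r n) x) \<longlonglongrightarrow> g x"
    using r by (rule eventually_mono) (rule lim)
  with \<open>strict_mono r\<close> show ?thesis
    by blast
qed

section \<open>Independent sub-Gaussian variables\<close>

context prob_space
begin

lemma sub_gaussian_integrable_exp:
  assumes "sub_gaussian M W 0 s" "W \<in> borel_measurable M"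
  shows "integrable M (\<lambda>\<omega>. exp (\<theta> * W \<omega>))"
  using assms by (intro integrable_if_nn_integral_le[where b = "exp (\<theta>\<^sup>2 * s\<^sup>2 / 2)"])
    (auto simp: sub_gaussian_def)

lemma sub_gaussian_square_integrable:
  assumes "sub_gaussian M W 0 s" "W \<in> borel_measurable M"
  shows "square_integrable M W"
proof -
  have "integrable M (\<lambda>\<omega>. (W \<omega>)\<^sup>2)"
  proof (rule Bochner_Integration.integrable_bound)
    show "integrable M (\<lambda>\<omega>. 2 * (exp (W \<omega>) + exp (- W \<omega>)))"
      using sub_gaussian_integrable_exp[OF assms, of 1] sub_gaussian_integrable_exp[OF assms, of "-1"]
      by simp
    show "AE \<omega> in M. norm ((W \<omega>)\<^sup>2) \<le> norm (2 * (exp (W \<omega>) + exp (- W \<omega>)))"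
      using sq_le_exp_add_exp_neg by (intro AE_I2) (simp add: add_pos_pos less_imp_le)
  qed (use assms(2) in measurable)
  with assms(2) show ?thesis
    by (simp add: square_integrable_def)
qed

lemma indep_sub_gaussian_sum_mgf:
  fixes Z :: "'i \<Rightarrow> 'a \<Rightarrow> real"
  assumes indep: "indep_vars (\<lambda>_. borel) Z I" and F: "finite F" "F \<subseteq> I"
    and subg: "\<And>k. k \<in> F \<Longrightarrow> sub_gaussian M (Z k) 0 (s k)"
  shows "(\<integral>\<^sup>+\<omega>. ennreal (exp (\<theta> * (\<Sum>k\<in>F. a k * Z k \<omega>))) \<partial>M)
    \<le> ennreal (exp (\<theta>\<^sup>2 * (\<Sum>k\<in>F. (a k)\<^sup>2 * (s k)\<^sup>2) / 2))"
proof -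
  have "(\<integral>\<^sup>+\<omega>. ennreal (exp (\<theta> * (\<Sum>k\<in>F. a k * Z k \<omega>))) \<partial>M)
      = (\<integral>\<^sup>+\<omega>. (\<Prod>k\<in>F. ennreal (exp ((\<theta> * a k) * Z k \<omega>))) \<partial>M)"
    by (intro nn_integral_cong) (simp add: sum_distrib_left exp_sum F prod_ennreal mult.assoc)
  also have "\<dots> = (\<Prod>k\<in>F. \<integral>\<^sup>+\<omega>. ennreal (exp ((\<theta> * a k) * Z k \<omega>)) \<partial>M)"
    by (intro indep_vars_nn_integral F indep_vars_compose2[OF indep_vars_subset[OF indep F(2)]]) auto
  also have "\<dots> \<le> (\<Prod>k\<in>F. ennreal (exp ((\<theta> * a k)\<^sup>2 * (s k)\<^sup>2 / 2)))"
    using subg by (intro prod_mono_ennreal) (simp add: sub_gaussian_def)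
  also have "\<dots> = ennreal (exp (\<theta>\<^sup>2 * (\<Sum>k\<in>F. (a k)\<^sup>2 * (s k)\<^sup>2) / 2))"
    by (simp add: prod_ennreal exp_sum[OF F(1), symmetric] sum_distrib_left sum_divide_distrib
        power_mult_distrib mult.assoc)
  finally show ?thesis .
qed

lemma indep_centered_integral_mult_eq_0:
  fixes Z :: "'i \<Rightarrow> 'a \<Rightarrow> real"
  assumes "indep_vars (\<lambda>_. borel) Z I" "i \<in> I" "j \<in> I" "i \<noteq> j"
    and "integrable M (Z i)" "integrable M (Z j)" "expectation (Z i) = 0"
  shows "(\<integral>\<omega>. Z i \<omega> * Z j \<omega> \<partial>M) = 0"
proof -
  have "(\<integral>\<omega>. (\<Prod>k\<in>{i, j}. Z k \<omega>) \<partial>M) = (\<Prod>k\<in>{i, j}. expectation (Z k))"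
    using assms by (intro indep_vars_lebesgue_integral indep_vars_subset[OF assms(1)]) auto
  then show ?thesis
    using assms by simp
qed

lemma indep_centered_integral_sum_mult_sum:
  fixes Z :: "'i \<Rightarrow> 'a \<Rightarrow> real"
  assumes indep: "indep_vars (\<lambda>_. borel) Z I" and F: "finite F" "F \<subseteq> I"
    and sq: "\<And>k. k \<in> F \<Longrightarrow> square_integrable M (Z k)"
    and mean: "\<And>k. k \<in> F \<Longrightarrow> expectation (Z k) = 0"
  shows "(\<integral>\<omega>. (\<Sum>i\<in>F. a i * Z i \<omega>) * (\<Sum>j\<in>F. b j * Z j \<omega>) \<partial>M)
    = (\<Sum>i\<in>F. a i * b i * (\<integral>\<omega>. (Z i \<omega>)\<^sup>2 \<partial>M))"
proof -
  have int: "integrable M (\<lambda>\<omega>. a i * b j * (Z i \<omega> * Z j \<omega>))" if "i \<in> F" "j \<in> F" for i j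
    using square_integrable_mult[OF sq sq] that by simp
  have "(\<integral>\<omega>. (\<Sum>i\<in>F. a i * Z i \<omega>) * (\<Sum>j\<in>F. b j * Z j \<omega>) \<partial>M)
      = (\<integral>\<omega>. (\<Sum>i\<in>F. \<Sum>j\<in>F. a i * b j * (Z i \<omega> * Z j \<omega>)) \<partial>M)"
    by (simp add: sum_product algebra_simps)
  also have "\<dots> = (\<Sum>i\<in>F. \<Sum>j\<in>F. a i * b j * (\<integral>\<omega>. Z i \<omega> * Z j \<omega> \<partial>M))"
    using int by (simp add: Bochner_Integration.integrable_sum)
  also have "\<dots> = (\<Sum>i\<in>F. \<Sum>j\<in>F. if i = j then a i * b i * (\<integral>\<omega>. (Z i \<omega>)\<^sup>2 \<partial>M) else 0)"
    using F sq mean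
    by (intro sum.cong refl)
      (auto simp: power2_eq_square square_integrable_integrable
            intro!: indep_centered_integral_mult_eq_0[OF indep])
  also have "\<dots> = (\<Sum>i\<in>F. a i * b i * (\<integral>\<omega>. (Z i \<omega>)\<^sup>2 \<partial>M))"
    using F(1) by (simp add: sum.delta)
  finally show ?thesis .
qed

end

section \<open>The Karhunen-Loeve setting\<close>

lemma set_lebesgue_integral_eq_integral_restrict_space:
  fixes f :: "'a \<Rightarrow> real"
  assumes "A \<in> sets M"
  shows "(LINT x:A|M. f x) = integral\<^sup>L (restrict_space M A) f"
  using assms by (simp add: integral_restrict_space set_lebesgue_integral_def Int_absorb2 sets.sets_into_space)

lemma finite_measure_restrict_space_lborel_Icc:
  "finite_measure (restrict_space lborel {a..b::real})"
  by (intro finite_measureI) (simp add: emeasure_restrict_space emeasure_lborel_Icc_eq)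

locale KL_expansion = prob_space M for M :: "'a measure" +
  fixes X :: "real \<Rightarrow> 'a \<Rightarrow> real" and e :: "nat \<Rightarrow> real \<Rightarrow> real" and lam :: "nat \<Rightarrow> real"
  assumes X_meas: "\<And>t. t \<in> {0..1} \<Longrightarrow> X t \<in> borel_measurable M"
    and X_L2: "\<And>t. t \<in> {0..1} \<Longrightarrow> integrable M (\<lambda>\<omega>. (X t \<omega>)\<^sup>2)"
    and cov_cont: "continuous_on ({0..1} \<times> {0..1}) (\<lambda>(s, t). cov_fun M X s t)"
    and e_meas: "\<And>k. k \<ge> 1 \<Longrightarrow> e k \<in> borel_measurable lborel"
    and e_L2: "\<And>k. k \<ge> 1 \<Longrightarrow> set_integrable lborel {0..1::real} (\<lambda>t. (e k t)\<^sup>2)"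
    and e_orthonormal: "\<And>j k. j \<ge> 1 \<Longrightarrow> k \<ge> 1 \<Longrightarrow>
        (LINT t:{0..1}|lborel. e j t * e k t) = (if j = k then 1 else 0)"
    and e_eigen: "\<And>k t. k \<ge> 1 \<Longrightarrow> t \<in> {0..1} \<Longrightarrow>
        (LINT s:{0..1}|lborel. cov_fun M X s t * e k s) = lam k * e k t"
    and KL_conv: "\<And>\<delta>. \<delta> > 0 \<Longrightarrow> \<exists>N. \<forall>n\<ge>N. \<forall>t\<in>{0..1}.
        (\<integral>\<omega>. (KL_trunc X e n t \<omega> - X t \<omega>)\<^sup>2 \<partial>M) \<le> \<delta>"
    and Z_indep: "indep_vars (\<lambda>_. borel) (KL_coeff X e) {1..}"
    and Z_mean: "\<And>k. k \<ge> 1 \<Longrightarrow> (\<integral>\<omega>. KL_coeff X e k \<omega> \<partial>M) = 0"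
    and Z_subg: "\<And>k. k \<ge> 1 \<Longrightarrow> sub_gaussian M (KL_coeff X e k) 0 (sqrt (lam k))"
begin

abbreviation Z :: "nat \<Rightarrow> 'a \<Rightarrow> real" where
  "Z \<equiv> KL_coeff X e"

abbreviation T :: "nat \<Rightarrow> real \<Rightarrow> 'a \<Rightarrow> real" where
  "T \<equiv> KL_trunc X e"

abbreviation U :: "real measure" where
  "U \<equiv> restrict_space lborel {0..1}"

lemma lam_nonneg: "k \<ge> 1 \<Longrightarrow> lam k \<ge> 0"
  using Z_subg[of k] by (simp add: sub_gaussian_def)

lemma square_integrable_KL_coeff: "k \<ge> 1 \<Longrightarrow> square_integrable M (Z k)"
  using Z_indep Z_subg by (intro sub_gaussian_square_integrable) (auto simp: indep_vars_def)

lemma square_integrable_X: "t \<in> {0..1} \<Longrightarrow> square_integrable M (X t)"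
  using X_meas X_L2 by (simp add: square_integrable_def)

lemma KL_trunc_eq_sum: "T n t \<omega> = (\<Sum>k\<in>{1..n}. e k t * Z k \<omega>)"
  by (simp add: KL_trunc_def mult.commute)

lemma square_integrable_KL_trunc: "square_integrable M (T n t)"
  unfolding KL_trunc_eq_sum[abs_def]
  by (intro square_integrable_sum square_integrable_cmult square_integrable_KL_coeff) simp

lemma KL_trunc_measurable [measurable]: "T n t \<in> borel_measurable M"
  using square_integrable_KL_trunc by (simp add: square_integrable_def)

lemma integral_KL_trunc_mult:
  "(\<integral>\<omega>. T n s \<omega> * T n t \<omega> \<partial>M) = (\<Sum>j\<in>{1..n}. e j s * e j t * (\<integral>\<omega>. (Z j \<omega>)\<^sup>2 \<partial>M))"
  unfolding KL_trunc_eq_sum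
  using square_integrable_KL_coeff Z_mean
  by (intro indep_centered_integral_sum_mult_sum[OF Z_indep]) auto

lemma cov_fun_bounded:
  obtains B where "B \<ge> 0" "\<And>s t. s \<in> {0..1} \<Longrightarrow> t \<in> {0..1} \<Longrightarrow> \<bar>cov_fun M X s t\<bar> \<le> B"
proof -
  have "compact ((\<lambda>(s, t). cov_fun M X s t) ` ({0..1} \<times> {0..1}))"
    by (intro compact_continuous_image cov_cont compact_Times) auto
  then obtain B where B: "\<And>y. y \<in> (\<lambda>(s, t). cov_fun M X s t) ` ({0..1} \<times> {0..1}) \<Longrightarrow> norm y \<le> B"
    by (meson bounded_iff compact_imp_bounded)
  have "\<bar>cov_fun M X s t\<bar> \<le> B" if "s \<in> {0..1}" "t \<in> {0..1}" for s t
    using B[of "cov_fun M X s t"] that by force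
  with order_trans[OF abs_ge_zero] show ?thesis
    by (meson that atLeastAtMost_iff zero_le_one order_refl)
qed

lemma cov_fun_diag: "cov_fun M X s s = (\<integral>\<omega>. (X s \<omega>)\<^sup>2 \<partial>M)"
  by (simp add: cov_fun_def power2_eq_square)

lemma KL_trunc_L2_conv: "\<delta> > 0 \<Longrightarrow> \<exists>N. \<forall>n\<ge>N. \<forall>t\<in>{0..1}. (\<integral>\<omega>. (X t \<omega> - T n t \<omega>)\<^sup>2 \<partial>M) \<le> \<delta>"
  using KL_conv by (simp add: power2_commute)

lemma integral_sq_KL_trunc_le:
  assumes "t \<in> {0..1}"
  shows "(\<integral>\<omega>. (T n t \<omega>)\<^sup>2 \<partial>M) \<le> 2 * (\<integral>\<omega>. (X t \<omega> - T n t \<omega>)\<^sup>2 \<partial>M) + 2 * (\<integral>\<omega>. (X t \<omega>)\<^sup>2 \<partial>M)"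
  using integral_sq_add_le[of M "\<lambda>\<omega>. T n t \<omega> - X t \<omega>" "X t"] assms
  by (simp add: square_integrable_diff square_integrable_KL_trunc square_integrable_X power2_commute)

text \<open>The weight \<open>\<eta>\<close> balances the two cross terms of \<open>abs_integral_mult_diff_le\<close>.\<close>
lemma cov_fun_uniform_approx:
  assumes t: "t \<in> {0..1}" and "\<gamma> > 0"
  shows "\<exists>N. \<forall>n\<ge>N. \<forall>s\<in>{0..1}.
    \<bar>cov_fun M X s t - (\<Sum>j\<in>{1..n}. e j s * e j t * (\<integral>\<omega>. (Z j \<omega>)\<^sup>2 \<partial>M))\<bar> \<le> \<gamma>"
proof -
  obtain B where B: "B \<ge> 0" "\<And>s. s \<in> {0..1} \<Longrightarrow> (\<integral>\<omega>. (X s \<omega>)\<^sup>2 \<partial>M) \<le> B"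
    using cov_fun_bounded by (metis cov_fun_diag abs_le_D1)
  define \<eta> where "\<eta> = \<gamma> / (3 * B + 2)"
  define \<delta> where "\<delta> = min 1 (\<gamma> * \<eta> / 2)"
  have \<eta>: "\<eta> > 0"
    using \<open>\<gamma> > 0\<close> B(1) by (simp add: \<eta>_def)
  then have \<delta>: "\<delta> > 0" "\<delta> \<le> 1" "\<delta> / \<eta> \<le> \<gamma> / 2"
    using \<open>\<gamma> > 0\<close> by (auto simp: \<delta>_def divide_le_eq mult.commute)
  obtain N where N: "\<And>n s. n \<ge> N \<Longrightarrow> s \<in> {0..1} \<Longrightarrow> (\<integral>\<omega>. (X s \<omega> - T n s \<omega>)\<^sup>2 \<partial>M) \<le> \<delta>"
    using KL_trunc_L2_conv[OF \<delta>(1)] by blast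
  have "\<bar>cov_fun M X s t - (\<Sum>j\<in>{1..n}. e j s * e j t * (\<integral>\<omega>. (Z j \<omega>)\<^sup>2 \<partial>M))\<bar> \<le> \<gamma>"
    if n: "n \<ge> N" and s: "s \<in> {0..1}" for n s
  proof -
    have Ts: "(\<integral>\<omega>. (T n s \<omega>)\<^sup>2 \<partial>M) \<le> 2 * \<delta> + 2 * B"
      using integral_sq_KL_trunc_le[OF s, of n] N[OF n s] B(2)[OF s] by linarith
    have "\<bar>cov_fun M X s t - (\<Sum>j\<in>{1..n}. e j s * e j t * (\<integral>\<omega>. (Z j \<omega>)\<^sup>2 \<partial>M))\<bar>
        = \<bar>(\<integral>\<omega>. X s \<omega> * X t \<omega> \<partial>M) - (\<integral>\<omega>. T n s \<omega> * T n t \<omega> \<partial>M)\<bar>"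
      by (simp add: cov_fun_def integral_KL_trunc_mult)
    also have "\<dots> \<le> (\<delta> / \<eta> + \<eta> * B) / 2 + (\<delta> / \<eta> + \<eta> * (2 * \<delta> + 2 * B)) / 2"
      using abs_integral_mult_diff_le[OF square_integrable_X[OF s] square_integrable_KL_trunc
          square_integrable_X[OF t] square_integrable_KL_trunc \<eta>, of n s n t]
        N[OF n s] N[OF n t] B(2)[OF t] Ts \<eta>
      by (smt (verit) divide_right_mono mult_left_mono)
    also have "\<dots> \<le> \<delta> / \<eta> + \<eta> * (3 * B + 2) / 2"
      using \<delta>(2) \<eta> by (simp add: field_simps)
    also have "\<eta> * (3 * B + 2) / 2 = \<gamma> / 2"
      using B(1) by (simp add: \<eta>_def)
    finally show ?thesis
      using \<delta>(3) by linarith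
  qed
  then show ?thesis
    by blast
qed

lemma square_integrable_e: "k \<ge> 1 \<Longrightarrow> square_integrable U (e k)"
  using e_meas e_L2 by (simp add: square_integrable_def measurable_restrict_space1 flip: set_integrable_eq)

lemma square_integrable_cov_fun:
  assumes t: "t \<in> {0..1}"
  shows "square_integrable U (\<lambda>s. cov_fun M X s t)"
proof -
  obtain B where B: "\<And>s t. s \<in> {0..1} \<Longrightarrow> t \<in> {0..1} \<Longrightarrow> \<bar>cov_fun M X s t\<bar> \<le> B"
    using cov_fun_bounded by blast
  have "continuous_on {0..1} (\<lambda>s. (\<lambda>(s, t). cov_fun M X s t) (s, t))"
    by (rule continuous_on_compose2[OF cov_cont continuous_on_Pair[OF continuous_on_id continuous_on_const]])
      (use t in auto)
  then have meas: "(\<lambda>s. cov_fun M X s t) \<in> borel_measurable U"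
    using borel_measurable_continuous_on_restrict
    by (simp add: measurable_cong_sets[OF sets_restrict_space_cong[OF sets_lborel] refl])
  have "(cov_fun M X s t)\<^sup>2 \<le> B\<^sup>2" if "s \<in> {0..1}" for s
    using power_mono[OF B[OF that t] abs_ge_zero, of 2] by simp
  then have "integrable U (\<lambda>s. (cov_fun M X s t)\<^sup>2)"
    using meas
    by (intro finite_measure.integrable_const_bound[OF finite_measure_restrict_space_lborel_Icc, where B = "B\<^sup>2"])
      (auto intro!: AE_I2 simp: space_restrict_space)
  with meas show ?thesis
    by (simp add: square_integrable_def)
qed

lemma integral_e_mult_e: "j \<ge> 1 \<Longrightarrow> k \<ge> 1 \<Longrightarrow> integral\<^sup>L U (\<lambda>s. e j s * e k s) = (if j = k then 1 else 0)"
  using e_orthonormal by (simp add: set_lebesgue_integral_eq_integral_restrict_space)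

lemma integral_cov_fun_mult_e:
  "k \<ge> 1 \<Longrightarrow> t \<in> {0..1} \<Longrightarrow> integral\<^sup>L U (\<lambda>s. cov_fun M X s t * e k s) = lam k * e k t"
  using e_eigen by (simp add: set_lebesgue_integral_eq_integral_restrict_space)

lemma integral_sum_mult_e:
  assumes "k \<in> {1..n}"
  shows "integral\<^sup>L U (\<lambda>s. (\<Sum>j\<in>{1..n}. a j * e j s) * e k s) = a k"
proof -
  have "integral\<^sup>L U (\<lambda>s. (\<Sum>j\<in>{1..n}. a j * e j s) * e k s)
      = (\<Sum>j\<in>{1..n}. a j * integral\<^sup>L U (\<lambda>s. e j s * e k s))"
    using assms square_integrable_mult[OF square_integrable_e square_integrable_e]
    by (simp add: sum_distrib_right mult.assoc)
  also have "\<dots> = (\<Sum>j\<in>{1..n}. if j = k then a k else 0)"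
    using assms by (intro sum.cong refl) (simp add: integral_e_mult_e)
  also have "\<dots> = a k"
    using assms by simp
  finally show ?thesis .
qed

text \<open>Integrate the uniform approximation of the covariance against \<open>e\<^sub>k\<close>: the eigen-equation
  turns the covariance into \<open>\<lambda>\<^sub>k e\<^sub>k t\<close>, orthonormality turns the approximant into
  \<open>E[Z\<^sub>k\<^sup>2] e\<^sub>k t\<close>.\<close>
lemma abs_second_moment_defect_le:
  assumes k: "k \<ge> 1" and t: "t \<in> {0..1}" and "\<gamma> > 0"
  shows "\<bar>(lam k - (\<integral>\<omega>. (Z k \<omega>)\<^sup>2 \<partial>M)) * e k t\<bar> \<le> \<gamma> * integral\<^sup>L U (\<lambda>s. \<bar>e k s\<bar>)"
proof -
  define v where "v j = (\<integral>\<omega>. (Z j \<omega>)\<^sup>2 \<partial>M)" for j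
  have ek: "square_integrable U (e k)"
    using square_integrable_e[OF k] .
  obtain N where N: "\<And>n s. n \<ge> N \<Longrightarrow> s \<in> {0..1} \<Longrightarrow>
      \<bar>cov_fun M X s t - (\<Sum>j\<in>{1..n}. e j s * e j t * v j)\<bar> \<le> \<gamma>"
    using cov_fun_uniform_approx[OF t \<open>\<gamma> > 0\<close>] unfolding v_def by blast
  define n where "n = max N k"
  define p where "p s = (\<Sum>j\<in>{1..n}. (e j t * v j) * e j s)" for s
  have p: "square_integrable U p"
    unfolding p_def[abs_def]
    by (intro square_integrable_sum square_integrable_cmult square_integrable_e) simp
  have cp: "square_integrable U (\<lambda>s. cov_fun M X s t - p s)"
    by (intro square_integrable_diff square_integrable_cov_fun t p)
  have "integral\<^sup>L U (\<lambda>s. p s * e k s) = e k t * v k"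
    unfolding p_def using k by (intro integral_sum_mult_e) (simp add: n_def)
  then have "(lam k - v k) * e k t = integral\<^sup>L U (\<lambda>s. (cov_fun M X s t - p s) * e k s)"
    using integral_cov_fun_mult_e[OF k t] square_integrable_mult[OF square_integrable_cov_fun[OF t] ek]
      square_integrable_mult[OF p ek]
    by (simp add: left_diff_distrib algebra_simps)
  also have "\<bar>\<dots>\<bar> \<le> integral\<^sup>L U (\<lambda>s. \<gamma> * \<bar>e k s\<bar>)"
  proof (rule order_trans[OF integral_abs_bound integral_mono])
    show "integrable U (\<lambda>s. \<bar>(cov_fun M X s t - p s) * e k s\<bar>)"
      using square_integrable_mult[OF cp ek] by simp
    show "integrable U (\<lambda>s. \<gamma> * \<bar>e k s\<bar>)"
      using finite_measure.square_integrable_integrable[OF finite_measure_restrict_space_lborel_Icc ek]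
      by (intro integrable_mult_right integrable_abs)
    show "\<bar>(cov_fun M X s t - p s) * e k s\<bar> \<le> \<gamma> * \<bar>e k s\<bar>" if "s \<in> space U" for s
    proof -
      have "\<bar>cov_fun M X s t - p s\<bar> \<le> \<gamma>"
        using N[of n s] that by (simp add: p_def n_def space_restrict_space ac_simps)
      then show ?thesis
        by (simp add: abs_mult mult_right_mono)
    qed
  qed
  finally show ?thesis
    by (simp add: v_def)
qed

lemma e_nonzero:
  assumes "k \<ge> 1"
  obtains t where "t \<in> {0..1}" "e k t \<noteq> 0"
proof (rule ccontr)
  assume "\<not> thesis"
  with that have "integral\<^sup>L U (\<lambda>s. e k s * e k s) = integral\<^sup>L U (\<lambda>s. 0)"
    by (intro Bochner_Integration.integral_cong) (auto simp: space_restrict_space)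
  with integral_e_mult_e[OF assms assms] show False
    by simp
qed

lemma second_moment_KL_coeff:
  assumes k: "k \<ge> 1"
  shows "(\<integral>\<omega>. (Z k \<omega>)\<^sup>2 \<partial>M) = lam k"
proof -
  have "(lam k - (\<integral>\<omega>. (Z k \<omega>)\<^sup>2 \<partial>M)) * e k t = 0" if "t \<in> {0..1}" for t
    using abs_second_moment_defect_le[OF k that] by (rule eq_0_if_abs_le_mult_all_pos)
  with e_nonzero[OF k] show ?thesis
    by (metis eq_iff_diff_eq_0 mult_eq_0_iff)
qed

lemma integral_KL_sum_sq:
  assumes "finite F" "F \<subseteq> {1..}"
  shows "(\<integral>\<omega>. (\<Sum>k\<in>F. a k * Z k \<omega>)\<^sup>2 \<partial>M) = (\<Sum>k\<in>F. (a k)\<^sup>2 * lam k)"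
  using indep_centered_integral_sum_mult_sum[OF Z_indep assms, of a a] assms
    square_integrable_KL_coeff Z_mean second_moment_KL_coeff
  by (auto simp: power2_eq_square subset_iff intro!: sum.cong)

lemma mgf_KL_sum:
  assumes "finite F" "F \<subseteq> {1..}"
  shows "(\<integral>\<^sup>+\<omega>. ennreal (exp (\<theta> * (\<Sum>k\<in>F. a k * Z k \<omega>))) \<partial>M)
    \<le> ennreal (exp (\<theta>\<^sup>2 * (\<integral>\<omega>. (\<Sum>k\<in>F. a k * Z k \<omega>)\<^sup>2 \<partial>M) / 2))"
proof -
  have "(\<Sum>k\<in>F. (a k)\<^sup>2 * (sqrt (lam k))\<^sup>2) = (\<Sum>k\<in>F. (a k)\<^sup>2 * lam k)"
    using assms lam_nonneg by (intro sum.cong) auto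
  then show ?thesis
    using indep_sub_gaussian_sum_mgf[OF Z_indep assms Z_subg, of \<theta> a] assms
    by (simp add: integral_KL_sum_sq subset_iff)
qed

lemma KL_trunc_diff_eq_sum:
  assumes "L \<le> n"
  shows "T n t \<omega> - T L t \<omega> = (\<Sum>k\<in>{Suc L..n}. e k t * Z k \<omega>)"
proof -
  have "{1..n} = {1..L} \<union> {Suc L..n}"
    using assms by auto
  then show ?thesis
    by (simp add: KL_trunc_eq_sum sum.union_disjoint)
qed

lemma mgf_KL_trunc:
  "(\<integral>\<^sup>+\<omega>. ennreal (exp (\<theta> * T n t \<omega>)) \<partial>M) \<le> ennreal (exp (\<theta>\<^sup>2 * (\<integral>\<omega>. (T n t \<omega>)\<^sup>2 \<partial>M) / 2))"
  unfolding KL_trunc_eq_sum by (rule mgf_KL_sum) auto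

lemma mgf_KL_trunc_diff:
  "L \<le> n \<Longrightarrow> (\<integral>\<^sup>+\<omega>. ennreal (exp (\<theta> * (T n t \<omega> - T L t \<omega>))) \<partial>M)
    \<le> ennreal (exp (\<theta>\<^sup>2 * (\<integral>\<omega>. (T n t \<omega> - T L t \<omega>)\<^sup>2 \<partial>M) / 2))"
  unfolding KL_trunc_diff_eq_sum by (rule mgf_KL_sum) auto

lemma KL_trunc_L2_tendsto:
  assumes "t \<in> {0..1}"
  shows "(\<lambda>n. \<integral>\<omega>. (T n t \<omega> - X t \<omega>)\<^sup>2 \<partial>M) \<longlonglongrightarrow> 0"
proof (rule LIMSEQ_I)
  fix r :: real
  assume "r > 0"
  then obtain N where "\<forall>n\<ge>N. \<forall>t\<in>{0..1}. (\<integral>\<omega>. (T n t \<omega> - X t \<omega>)\<^sup>2 \<partial>M) \<le> r / 2"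
    using KL_conv[of "r / 2"] by auto
  with assms \<open>r > 0\<close> show "\<exists>N. \<forall>n\<ge>N. norm ((\<integral>\<omega>. (T n t \<omega> - X t \<omega>)\<^sup>2 \<partial>M) - 0) < r"
    by (fastforce simp: abs_of_nonneg)
qed

lemma integral_sq_KL_trunc_diff_le:
  assumes "t \<in> {0..1}"
  shows "(\<integral>\<omega>. (T n t \<omega> - T L t \<omega>)\<^sup>2 \<partial>M)
    \<le> 2 * (\<integral>\<omega>. (X t \<omega> - T n t \<omega>)\<^sup>2 \<partial>M) + 2 * (\<integral>\<omega>. (X t \<omega> - T L t \<omega>)\<^sup>2 \<partial>M)"
  using integral_sq_add_le[of M "\<lambda>\<omega>. T n t \<omega> - X t \<omega>" "\<lambda>\<omega>. X t \<omega> - T L t \<omega>"] assms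
  by (simp add: square_integrable_diff square_integrable_KL_trunc square_integrable_X power2_commute)

text \<open>The tail \<open>X\<^sub>t - X'\<^sub>t\<close> inherits the sub-Gaussian bound of the finite tails
  \<open>T\<^sub>n - T\<^sub>L\<close> by Fatou's lemma along an almost surely convergent subsequence.\<close>
lemma mgf_KL_tail:
  assumes t: "t \<in> {0..1}" and L: "(\<integral>\<omega>. (X t \<omega> - T L t \<omega>)\<^sup>2 \<partial>M) \<le> \<epsilon>\<^sup>2" and "\<epsilon> > 0"
  shows "(\<integral>\<^sup>+\<omega>. ennreal (exp (\<alpha> * (X t \<omega> - T L t \<omega>))) \<partial>M) \<le> ennreal (exp (\<alpha>\<^sup>2 * (3 * \<epsilon>\<^sup>2) / 2))"
proof -
  obtain N0 where N0: "\<And>n. n \<ge> N0 \<Longrightarrow> (\<integral>\<omega>. (X t \<omega> - T n t \<omega>)\<^sup>2 \<partial>M) \<le> \<epsilon>\<^sup>2 / 2"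
    using KL_trunc_L2_conv[of "\<epsilon>\<^sup>2 / 2"] \<open>\<epsilon> > 0\<close> t by (meson zero_less_power half_gt_zero)
  define N where "N = max L N0"
  have bound: "(\<integral>\<^sup>+\<omega>. ennreal (exp (\<alpha> * (T n t \<omega> - T L t \<omega>))) \<partial>M) \<le> ennreal (exp (\<alpha>\<^sup>2 * (3 * \<epsilon>\<^sup>2) / 2))"
    if "n \<ge> N" for n
  proof -
    have "(\<integral>\<omega>. (T n t \<omega> - T L t \<omega>)\<^sup>2 \<partial>M) \<le> 3 * \<epsilon>\<^sup>2"
      using integral_sq_KL_trunc_diff_le[OF t, of n L] N0[of n] L that by (simp add: N_def)
    then have "exp (\<alpha>\<^sup>2 * (\<integral>\<omega>. (T n t \<omega> - T L t \<omega>)\<^sup>2 \<partial>M) / 2) \<le> exp (\<alpha>\<^sup>2 * (3 * \<epsilon>\<^sup>2) / 2)"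
      by (simp add: mult_left_mono)
    with mgf_KL_trunc_diff[of L n \<alpha> t] that show ?thesis
      by (simp add: N_def order_trans)
  qed
  have "square_integrable M (\<lambda>\<omega>. T n t \<omega> - X t \<omega>)" for n
    by (intro square_integrable_diff square_integrable_KL_trunc square_integrable_X t)
  then obtain r where "strict_mono r" and r: "AE \<omega> in M. (\<lambda>n. T (r n) t \<omega>) \<longlonglongrightarrow> X t \<omega>"
    using L2_tendsto_imp_AE_LIMSEQ_subseq[where f = "\<lambda>n. T n t", OF _ KL_trunc_L2_tendsto[OF t]] by blast
  show ?thesis
  proof (rule nn_integral_le_if_AE_LIMSEQ)
    show "(\<lambda>\<omega>. ennreal (exp (\<alpha> * (T (r (n + N)) t \<omega> - T L t \<omega>)))) \<in> borel_measurable M" for n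
      by measurable
    show "AE \<omega> in M. (\<lambda>n. ennreal (exp (\<alpha> * (T (r (n + N)) t \<omega> - T L t \<omega>))))
        \<longlonglongrightarrow> ennreal (exp (\<alpha> * (X t \<omega> - T L t \<omega>)))"
      using r by eventually_elim
        (intro tendsto_ennrealI tendsto_exp tendsto_mult tendsto_diff tendsto_const
          LIMSEQ_ignore_initial_segment)
    show "(\<integral>\<^sup>+\<omega>. ennreal (exp (\<alpha> * (T (r (n + N)) t \<omega> - T L t \<omega>))) \<partial>M)
        \<le> ennreal (exp (\<alpha>\<^sup>2 * (3 * \<epsilon>\<^sup>2) / 2))" for n
      using seq_suble[OF \<open>strict_mono r\<close>, of "n + N"] by (intro bound) simp
  qed
qed

lemma integral_exp_KL_tail_le:
  assumes t: "t \<in> {0..1}" and L: "(\<integral>\<omega>. (X t \<omega> - T L t \<omega>)\<^sup>2 \<partial>M) \<le> \<epsilon>\<^sup>2" and "\<epsilon> > 0"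
    and \<alpha>: "\<bar>\<alpha>\<bar> * \<epsilon> \<le> R"
  shows "integrable M (\<lambda>\<omega>. exp (\<alpha> * (X t \<omega> - T L t \<omega>)))"
    and "(\<integral>\<omega>. exp (\<alpha> * (X t \<omega> - T L t \<omega>)) \<partial>M) \<le> exp (3 * R\<^sup>2 / 2)"
proof -
  have "(\<bar>\<alpha>\<bar> * \<epsilon>)\<^sup>2 \<le> R\<^sup>2"
    using \<alpha> \<open>\<epsilon> > 0\<close> by (intro power_mono) auto
  then have "ennreal (exp (\<alpha>\<^sup>2 * (3 * \<epsilon>\<^sup>2) / 2)) \<le> ennreal (exp (3 * R\<^sup>2 / 2))"
    by (intro ennreal_leI) (simp add: power_mult_distrib)
  then have mgf: "(\<integral>\<^sup>+\<omega>. ennreal (exp (\<alpha> * (X t \<omega> - T L t \<omega>))) \<partial>M) \<le> ennreal (exp (3 * R\<^sup>2 / 2))"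
    using mgf_KL_tail[OF t L \<open>\<epsilon> > 0\<close>, of \<alpha>] by (rule order_trans[rotated])
  have meas: "(\<lambda>\<omega>. exp (\<alpha> * (X t \<omega> - T L t \<omega>))) \<in> borel_measurable M"
    using X_meas[OF t] by measurable
  show "integrable M (\<lambda>\<omega>. exp (\<alpha> * (X t \<omega> - T L t \<omega>)))"
    by (rule integrable_if_nn_integral_le[OF meas _ mgf]) simp
  show "(\<integral>\<omega>. exp (\<alpha> * (X t \<omega> - T L t \<omega>)) \<partial>M) \<le> exp (3 * R\<^sup>2 / 2)"
    by (rule integral_le_if_nn_integral_le[OF meas _ mgf]) simp_all
qed

lemma integral_exp_KL_trunc_le:
  assumes t: "t \<in> {0..1}" and L: "(\<integral>\<omega>. (X t \<omega> - T L t \<omega>)\<^sup>2 \<partial>M) \<le> 1"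
    and B: "(\<integral>\<omega>. (X t \<omega>)\<^sup>2 \<partial>M) \<le> B"
  shows "integrable M (\<lambda>\<omega>. exp (\<beta> * T L t \<omega>))"
    and "(\<integral>\<omega>. exp (\<beta> * T L t \<omega>) \<partial>M) \<le> exp (\<beta>\<^sup>2 * (1 + B))"
proof -
  have "(\<integral>\<omega>. (T L t \<omega>)\<^sup>2 \<partial>M) \<le> 2 * (1 + B)"
    using integral_sq_KL_trunc_le[OF t, of L] L B by argo
  then have "\<beta>\<^sup>2 * (\<integral>\<omega>. (T L t \<omega>)\<^sup>2 \<partial>M) \<le> \<beta>\<^sup>2 * (2 * (1 + B))"
    by (rule mult_left_mono) simp
  then have "\<beta>\<^sup>2 * (\<integral>\<omega>. (T L t \<omega>)\<^sup>2 \<partial>M) / 2 \<le> \<beta>\<^sup>2 * (1 + B)"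
    by (simp add: algebra_simps)
  then have "ennreal (exp (\<beta>\<^sup>2 * (\<integral>\<omega>. (T L t \<omega>)\<^sup>2 \<partial>M) / 2)) \<le> ennreal (exp (\<beta>\<^sup>2 * (1 + B)))"
    by (intro ennreal_leI) simp
  then have mgf: "(\<integral>\<^sup>+\<omega>. ennreal (exp (\<beta> * T L t \<omega>)) \<partial>M) \<le> ennreal (exp (\<beta>\<^sup>2 * (1 + B)))"
    using mgf_KL_trunc[of \<beta> L t] by (rule order_trans[rotated])
  have meas: "(\<lambda>\<omega>. exp (\<beta> * T L t \<omega>)) \<in> borel_measurable M"
    by measurable
  show "integrable M (\<lambda>\<omega>. exp (\<beta> * T L t \<omega>))"
    by (rule integrable_if_nn_integral_le[OF meas _ mgf]) simp
  show "(\<integral>\<omega>. exp (\<beta> * T L t \<omega>) \<partial>M) \<le> exp (\<beta>\<^sup>2 * (1 + B))"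
    by (rule integral_le_if_nn_integral_le[OF meas _ mgf]) simp_all
qed

lemma KL_trunc_index_error:
  assumes "\<epsilon> > 0" "t \<in> {0..1}"
  shows "(\<integral>\<omega>. (X t \<omega> - T (trunc_index M X e \<epsilon>) t \<omega>)\<^sup>2 \<partial>M) \<le> \<epsilon>\<^sup>2"
proof -
  have "\<exists>L. \<forall>t\<in>{0..1}. (\<integral>\<omega>. (T L t \<omega> - X t \<omega>)\<^sup>2 \<partial>M) \<le> \<epsilon>\<^sup>2"
    using KL_conv[of "\<epsilon>\<^sup>2"] assms(1) by auto
  then have "\<forall>t\<in>{0..1}. (\<integral>\<omega>. (T (trunc_index M X e \<epsilon>) t \<omega> - X t \<omega>)\<^sup>2 \<partial>M) \<le> \<epsilon>\<^sup>2"
    unfolding trunc_index_def by (rule LeastI_ex)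
  with assms(2) show ?thesis
    by (simp add: power2_commute)
qed

lemma abs_scaled_exponent_le:
  fixes s b \<epsilon> :: real
  assumes "\<bar>s\<bar> \<le> 1" "0 < \<epsilon>" "\<epsilon> \<le> 1"
  shows "\<bar>s / \<epsilon> + b\<bar> * \<epsilon> \<le> 1 + \<bar>b\<bar>"
proof -
  have "\<bar>s / \<epsilon> + b\<bar> * \<epsilon> = \<bar>s + b * \<epsilon>\<bar>"
    using assms(2) by (simp add: abs_mult field_simps)
  also have "\<dots> \<le> \<bar>s\<bar> + \<bar>b\<bar> * \<epsilon>"
    using abs_triangle_ineq[of s "b * \<epsilon>"] assms(2) by (simp add: abs_mult)
  also have "\<dots> \<le> 1 + \<bar>b\<bar>"
    using assms(1) mult_left_le[OF assms(3), of "\<bar>b\<bar>"] by simp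
  finally show ?thesis .
qed

lemma KL_tail_exp_moments:
  assumes t: "t \<in> {0..1}" and L: "(\<integral>\<omega>. (X t \<omega> - T L t \<omega>)\<^sup>2 \<partial>M) \<le> \<epsilon>\<^sup>2"
    and \<epsilon>: "0 < \<epsilon>" "\<epsilon> \<le> 1" and \<alpha>: "\<alpha> \<in> {1 / \<epsilon> + 4 * c, 4 * c - 1 / \<epsilon>, 1 / \<epsilon>, - (1 / \<epsilon>)}"
  shows "integrable M (\<lambda>\<omega>. exp (\<alpha> * (X t \<omega> - T L t \<omega>)))"
    and "(\<integral>\<omega>. exp (\<alpha> * (X t \<omega> - T L t \<omega>)) \<partial>M) \<le> exp (3 * (1 + 4 * \<bar>c\<bar>)\<^sup>2 / 2)"
proof -
  have "\<bar>\<alpha>\<bar> * \<epsilon> \<le> 1 + 4 * \<bar>c\<bar>"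
    using \<alpha> abs_scaled_exponent_le[OF _ \<epsilon>, of 1 "4 * c"] abs_scaled_exponent_le[OF _ \<epsilon>, of "-1" "4 * c"]
      abs_scaled_exponent_le[OF _ \<epsilon>, of 1 0] abs_scaled_exponent_le[OF _ \<epsilon>, of "-1" 0]
    by (auto simp: abs_mult)
  then show "integrable M (\<lambda>\<omega>. exp (\<alpha> * (X t \<omega> - T L t \<omega>)))"
    and "(\<integral>\<omega>. exp (\<alpha> * (X t \<omega> - T L t \<omega>)) \<partial>M) \<le> exp (3 * (1 + 4 * \<bar>c\<bar>)\<^sup>2 / 2)"
    using integral_exp_KL_tail_le[OF t L \<epsilon>(1)] by blast+
qed

lemma exp_majorant_integral_le:
  fixes c K B \<epsilon> :: real
  assumes t: "t \<in> {0..1}" and L: "(\<integral>\<omega>. (X t \<omega> - T L t \<omega>)\<^sup>2 \<partial>M) \<le> \<epsilon>\<^sup>2"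
    and \<epsilon>: "0 < \<epsilon>" "\<epsilon> \<le> 1" and B: "(\<integral>\<omega>. (X t \<omega>)\<^sup>2 \<partial>M) \<le> B"
  defines "H \<equiv> \<lambda>\<omega>. \<epsilon>\<^sup>2 * (64 * c\<^sup>2 * (exp ((1 / \<epsilon> + 4 * c) * (X t \<omega> - T L t \<omega>))
      + exp ((4 * c - 1 / \<epsilon>) * (X t \<omega> - T L t \<omega>)) + exp ((X t \<omega> - T L t \<omega>) / \<epsilon>)
      + exp (- ((X t \<omega> - T L t \<omega>) / \<epsilon>))) + c\<^sup>2 / 2 * exp (4 * c * T L t \<omega>)
      + 2 * K\<^sup>2 * (exp ((X t \<omega> - T L t \<omega>) / \<epsilon>) + exp (- ((X t \<omega> - T L t \<omega>) / \<epsilon>))))"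
    and "A \<equiv> exp (3 * (1 + 4 * \<bar>c\<bar>)\<^sup>2 / 2)"
  shows "integrable M H"
    and "(\<integral>\<omega>. H \<omega> \<partial>M) \<le> (256 * c\<^sup>2 * A + c\<^sup>2 / 2 * exp (16 * c\<^sup>2 * (1 + B)) + 4 * K\<^sup>2 * A) * \<epsilon>\<^sup>2"
proof -
  define D where "D \<omega> = X t \<omega> - T L t \<omega>" for \<omega>
  define E where "E \<alpha> = (\<integral>\<omega>. exp (\<alpha> * D \<omega>) \<partial>M)" for \<alpha>
  note tail = KL_tail_exp_moments[OF t L \<epsilon>, of _ c]
  have tail1: "integrable M (\<lambda>\<omega>. exp ((1 / \<epsilon> + 4 * c) * D \<omega>)) \<and> E (1 / \<epsilon> + 4 * c) \<le> A"
    and tail2: "integrable M (\<lambda>\<omega>. exp ((4 * c - 1 / \<epsilon>) * D \<omega>)) \<and> E (4 * c - 1 / \<epsilon>) \<le> A"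
    and tail3: "integrable M (\<lambda>\<omega>. exp (D \<omega> / \<epsilon>)) \<and> E (1 / \<epsilon>) \<le> A"
    and tail4: "integrable M (\<lambda>\<omega>. exp (- (D \<omega> / \<epsilon>))) \<and> E (- (1 / \<epsilon>)) \<le> A"
    using tail[of "1 / \<epsilon> + 4 * c"] tail[of "4 * c - 1 / \<epsilon>"] tail[of "1 / \<epsilon>"] tail[of "- (1 / \<epsilon>)"]
    by (simp_all add: E_def D_def A_def)
  have trunc: "integrable M (\<lambda>\<omega>. exp ((4 * c) * T L t \<omega>))"
    "(\<integral>\<omega>. exp ((4 * c) * T L t \<omega>) \<partial>M) \<le> exp (16 * c\<^sup>2 * (1 + B))"
    using integral_exp_KL_trunc_le[OF t _ B, of L "4 * c"] L \<epsilon> power_le_one[of \<epsilon> 2]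
    by (simp_all add: power_mult_distrib)
  show "integrable M H"
    using tail1 tail2 tail3 tail4 trunc(1) by (simp add: H_def D_def)
  have "(\<integral>\<omega>. H \<omega> \<partial>M) = \<epsilon>\<^sup>2 * (64 * c\<^sup>2 * (E (1 / \<epsilon> + 4 * c) + E (4 * c - 1 / \<epsilon>) + E (1 / \<epsilon>)
      + E (- (1 / \<epsilon>))) + c\<^sup>2 / 2 * (\<integral>\<omega>. exp (4 * c * T L t \<omega>) \<partial>M)
      + 2 * K\<^sup>2 * (E (1 / \<epsilon>) + E (- (1 / \<epsilon>))))"
    using tail1 tail2 tail3 tail4 trunc(1) by (simp add: H_def E_def D_def)
  also have "\<dots> \<le> \<epsilon>\<^sup>2 * (64 * c\<^sup>2 * (A + A + A + A) + c\<^sup>2 / 2 * exp (16 * c\<^sup>2 * (1 + B)) + 2 * K\<^sup>2 * (A + A))"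
    using tail1 tail2 tail3 tail4 trunc(2)
    by (intro mult_left_mono add_mono) auto
  finally show "(\<integral>\<omega>. H \<omega> \<partial>M) \<le> (256 * c\<^sup>2 * A + c\<^sup>2 / 2 * exp (16 * c\<^sup>2 * (1 + B)) + 4 * K\<^sup>2 * A) * \<epsilon>\<^sup>2"
    by (simp add: algebra_simps)
qed

lemma nn_integral_sq_comp_KL_trunc_le:
  fixes g :: "real \<Rightarrow> real" and c K B \<epsilon> :: real
  assumes t: "t \<in> {0..1}" and \<epsilon>: "0 < \<epsilon>" "\<epsilon> \<le> 1" and "K \<ge> 0"
    and B: "(\<integral>\<omega>. (X t \<omega>)\<^sup>2 \<partial>M) \<le> B"
    and g: "\<And>x y. g x - g y \<le> max \<bar>exp (c * x) - exp (c * y)\<bar> (K * \<bar>x - y\<bar>)"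
  defines "A \<equiv> exp (3 * (1 + 4 * \<bar>c\<bar>)\<^sup>2 / 2)"
  shows "(\<integral>\<^sup>+\<omega>. ennreal ((g (X t \<omega>) - g (T (trunc_index M X e \<epsilon>) t \<omega>))\<^sup>2) \<partial>M)
    \<le> ennreal ((256 * c\<^sup>2 * A + c\<^sup>2 / 2 * exp (16 * c\<^sup>2 * (1 + B)) + 4 * K\<^sup>2 * A) * \<epsilon>\<^sup>2)"
proof -
  define L where "L = trunc_index M X e \<epsilon>"
  have L: "(\<integral>\<omega>. (X t \<omega> - T L t \<omega>)\<^sup>2 \<partial>M) \<le> \<epsilon>\<^sup>2"
    using KL_trunc_index_error[OF \<epsilon>(1) t] by (simp add: L_def)
  define H where "H = (\<lambda>\<omega>. \<epsilon>\<^sup>2 * (64 * c\<^sup>2 * (exp ((1 / \<epsilon> + 4 * c) * (X t \<omega> - T L t \<omega>))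
      + exp ((4 * c - 1 / \<epsilon>) * (X t \<omega> - T L t \<omega>)) + exp ((X t \<omega> - T L t \<omega>) / \<epsilon>)
      + exp (- ((X t \<omega> - T L t \<omega>) / \<epsilon>))) + c\<^sup>2 / 2 * exp (4 * c * T L t \<omega>)
      + 2 * K\<^sup>2 * (exp ((X t \<omega> - T L t \<omega>) / \<epsilon>) + exp (- ((X t \<omega> - T L t \<omega>) / \<epsilon>)))))"
  note majorant = exp_majorant_integral_le[OF t L \<epsilon> B, of c K, folded H_def A_def]
  have pointwise: "(g (X t \<omega>) - g (T L t \<omega>))\<^sup>2 \<le> H \<omega>" for \<omega>
  proof -
    have "\<bar>g (X t \<omega>) - g (T L t \<omega>)\<bar>
        \<le> max \<bar>exp (c * X t \<omega>) - exp (c * T L t \<omega>)\<bar> (K * \<bar>X t \<omega> - T L t \<omega>\<bar>)"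
      using g[of "X t \<omega>" "T L t \<omega>"] g[of "T L t \<omega>" "X t \<omega>"]
      by (simp add: abs_le_iff abs_minus_commute)
    from sq_diff_le_exp_moments[OF this \<open>K \<ge> 0\<close> \<epsilon>(1)] show ?thesis
      by (simp add: H_def)
  qed
  have "(\<integral>\<^sup>+\<omega>. ennreal ((g (X t \<omega>) - g (T L t \<omega>))\<^sup>2) \<partial>M) \<le> (\<integral>\<^sup>+\<omega>. ennreal (H \<omega>) \<partial>M)"
    using pointwise by (intro nn_integral_mono ennreal_leI)
  also have "\<dots> = ennreal (\<integral>\<omega>. H \<omega> \<partial>M)"
    using pointwise majorant(1)
    by (intro nn_integral_eq_integral AE_I2) (auto intro: order_trans[OF zero_le_power2])
  also have "\<dots> \<le> ennreal ((256 * c\<^sup>2 * A + c\<^sup>2 / 2 * exp (16 * c\<^sup>2 * (1 + B)) + 4 * K\<^sup>2 * A) * \<epsilon>\<^sup>2)"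
    using majorant(2) by (rule ennreal_leI)
  finally show ?thesis
    by (simp add: L_def)
qed

end

theorem theorem5:
  fixes M :: "'a measure" and X :: "real \<Rightarrow> 'a \<Rightarrow> real"
    and e :: "nat \<Rightarrow> real \<Rightarrow> real" and lam :: "nat \<Rightarrow> real"
    and g :: "real \<Rightarrow> real \<Rightarrow> real" and c_g K_g :: real
  assumes P: "prob_space M"
    and X_joint: "(\<lambda>(t, \<omega>). X t \<omega>) \<in> borel_measurable (restrict_space lborel {0..1} \<Otimes>\<^sub>M M)"
    and X_meas: "\<And>t. t \<in> {0..1} \<Longrightarrow> X t \<in> borel_measurable M"
    and X_L2: "\<And>t. t \<in> {0..1} \<Longrightarrow> integrable M (\<lambda>\<omega>. (X t \<omega>)\<^sup>2)"
    and X_centered: "\<And>t. t \<in> {0..1} \<Longrightarrow> (\<integral>\<omega>. X t \<omega> \<partial>M) = 0"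
    and cov_cont: "continuous_on ({0..1} \<times> {0..1}) (\<lambda>(s, t). cov_fun M X s t)"
    and e_meas: "\<And>k. k \<ge> 1 \<Longrightarrow> e k \<in> borel_measurable lborel"
    and e_L2: "\<And>k. k \<ge> 1 \<Longrightarrow> set_integrable lborel {0..1::real} (\<lambda>t. (e k t)\<^sup>2)"
    and e_orthonormal: "\<And>j k. j \<ge> 1 \<Longrightarrow> k \<ge> 1 \<Longrightarrow>
        (LINT t:{0..1}|lborel. e j t * e k t) = (if j = k then 1 else 0)"
    and e_eigen: "\<And>k t. k \<ge> 1 \<Longrightarrow> t \<in> {0..1} \<Longrightarrow>
        (LINT s:{0..1}|lborel. cov_fun M X s t * e k s) = lam k * e k t"
    and lam_decr: "\<And>k. k \<ge> 1 \<Longrightarrow> lam (Suc k) \<le> lam k"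
    and lam_nonneg: "\<And>k. k \<ge> 1 \<Longrightarrow> lam k \<ge> 0"
    and KL_conv: "\<And>\<delta>. \<delta> > 0 \<Longrightarrow> \<exists>N. \<forall>n\<ge>N. \<forall>t\<in>{0..1}.
        (\<integral>\<omega>. (KL_trunc X e n t \<omega> - X t \<omega>)\<^sup>2 \<partial>M) \<le> \<delta>"
    and Z_indep: "prob_space.indep_vars M (\<lambda>_. borel) (KL_coeff X e) {1..}"
    and Z_mean: "\<And>k. k \<ge> 1 \<Longrightarrow> (\<integral>\<omega>. KL_coeff X e k \<omega> \<partial>M) = 0"
    and Z_subg: "\<And>k. k \<ge> 1 \<Longrightarrow> sub_gaussian M (KL_coeff X e k) 0 (sqrt (lam k))"
    and K_nonneg: "K_g \<ge> 0"
    and g_bound: "\<And>t x y. t \<in> {0..1} \<Longrightarrow>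
        g t x - g t y \<le> max \<bar>exp (c_g * x) - exp (c_g * y)\<bar> (K_g * \<bar>x - y\<bar>)"
  shows "\<exists>C2::real. \<forall>t\<in>{0..1}. \<forall>\<epsilon>\<in>{0<..1}.
    (\<integral>\<^sup>+\<omega>. ennreal ((g t (X t \<omega>) - g t (KL_trunc X e (trunc_index M X e \<epsilon>) t \<omega>))\<^sup>2) \<partial>M)
      \<le> ennreal (C2 * \<epsilon>\<^sup>2)"
proof -
  interpret KL_expansion M X e lam
    using P X_meas X_L2 cov_cont e_meas e_L2 e_orthonormal e_eigen KL_conv Z_indep Z_mean Z_subg
    by (simp add: KL_expansion_def KL_expansion_axioms_def)
  obtain B where B: "\<And>s. s \<in> {0..1} \<Longrightarrow> (\<integral>\<omega>. (X s \<omega>)\<^sup>2 \<partial>M) \<le> B"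
    using cov_fun_bounded by (metis cov_fun_diag abs_le_D1)
  show ?thesis
    by (intro exI ballI, rule nn_integral_sq_comp_KL_trunc_le[where c = c_g and K = K_g])
      (auto intro: K_nonneg B g_bound)
qed

end
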